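(* Let $k\in\mathbb{N}$, $k>2$, and let $\mathcal{H}$ be a hedgehog with support function $h(s)=a_0+\sum_{n=1}^{\infty}(a_n\cos(ns)+b_n\sin(ns))$. Then the oriented area of the $k$th Order Midpoint Set $\Omega_{\mathcal{H},k}$ of $\mathcal{H}$ is \[ A_{\Omega_{\mathcal{H},k}}=\pi\sum_{n=1}^{\infty}n\big(a_{kn-1}^2+b_{kn-1}^2-a_{kn+1}^2-b_{kn+1}^2\big). \]
   Context: Write $u(s)=(\cos s,\sin s)$, $u'(s)=(-\sin s,\cos s)$. A hedgehog is a closed planar curve determined by a smooth $2\pi$-periodic function $h$ (its support function) via $\mathcal{H}(s)=h(s)u(s)+h'(s)u'(s)$. For $s\in\mathbb{R}$ and $j\in\mathbb{Z}$ let $\ell_j(s)=\{x:\langle x,u(s+\tfrac{2\pi j}{k})\rangle=h(s+\tfrac{2\pi j}{k})\}$. The equiangular $k$-gon circumscribed about $\mathcal{H}$ at parameter $s$ has vertices $v_j(s)=\ell_j(s)\cap\ell_{j+1}(s)$, $j=0,\dots,k-1$ (indices mod $k$), with center of mass $\frac1k\sum_j v_j(s)$. The $k$th Order Midpoint Set is the closed curve of these centers of mass, parameterized by $\Omega_{\mathcal{H},k}(s)=\frac2k\sum_{j=1}^k h(s+\tfrac{2\pi j}{k})u(s+\tfrac{2\pi j}{k})$, $s\in[0,\frac{2\pi}{k}]$. Its oriented area is $A_{\Omega_{\mathcal{H},k}}=\frac12\int_0^{2\pi/k}(x\,y'-y\,x')\,ds$ where $\Omega_{\mathcal{H},k}(s)=(x(s),y(s))$.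 *)

theory Defs
  imports "HOL-Analysis.Analysis"
begin

definition smooth_fun :: "(real \<Rightarrow> real) \<Rightarrow> bool" where
  "smooth_fun h \<longleftrightarrow> (\<exists>D :: nat \<Rightarrow> real \<Rightarrow> real. D 0 = h \<and>
      (\<forall>m x. (D m has_real_derivative D (Suc m) x) (at x)))"

definition periodic_2pi :: "(real \<Rightarrow> real) \<Rightarrow> bool" where
  "periodic_2pi h \<longleftrightarrow> (\<forall>s. h (s + 2 * pi) = h s)"

definition fourier_a :: "(real \<Rightarrow> real) \<Rightarrow> nat \<Rightarrow> real" where
  "fourier_a h n = (if n = 0 then (1 / (2 * pi)) * integral {0..2*pi} h
                    else (1 / pi) * integral {0..2*pi} (\<lambda>s. h s * cos (real n * s)))"

definition fourier_b :: "(real \<Rightarrow> real) \<Rightarrow> nat \<Rightarrow> real" where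
  "fourier_b h n = (if n = 0 then 0
                    else (1 / pi) * integral {0..2*pi} (\<lambda>s. h s * sin (real n * s)))"

definition omega_x :: "(real \<Rightarrow> real) \<Rightarrow> nat \<Rightarrow> real \<Rightarrow> real" where
  "omega_x h k s = (2 / real k) * (\<Sum>j=1..k. h (s + 2*pi*real j / real k) * cos (s + 2*pi*real j / real k))"

definition omega_y :: "(real \<Rightarrow> real) \<Rightarrow> nat \<Rightarrow> real \<Rightarrow> real" where
  "omega_y h k s = (2 / real k) * (\<Sum>j=1..k. h (s + 2*pi*real j / real k) * sin (s + 2*pi*real j / real k))"

definition midpoint_set_area :: "(real \<Rightarrow> real) \<Rightarrow> nat \<Rightarrow> real" where
  "midpoint_set_area h k = (1/2) * integral {0..2*pi / real k}
     (\<lambda>s. omega_x h k s * deriv (omega_y h k) s - omega_y h k s * deriv (omega_x h k) s)"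

end

(* Identify the plane with the complex numbers.  The midpoint set is then the curve
   z(s) = (2/k) sum_j h(s + 2 pi j/k) e^(i (s + 2 pi j/k)), and its oriented area over one
   period 2 pi/k is 1/k of (1/2) integral_0^(2 pi) Im (conj z z').  Parseval's identity for z
   and z', whose n-th Fourier coefficient is i n c_n(z), turns this into (pi/k) sum_n n |c_n(z)|^2.
   Averaging over the k rotations kills every coefficient of z except those at multiples of k,
   and c_n(h(s) e^(is)) = c_(n-1)(h); hence c_(kn)(z) = 2 c_(kn-1)(h) and
   c_(-kn)(z) = 2 conj (c_(kn+1)(h)), while 4 |c_m(h)|^2 = a_m^2 + b_m^2.
   Parseval's identity rests on uniqueness: by Stone-Weierstrass on the unit circle the
   trigonometric polynomials are uniformly dense, so a continuous periodic function whose
   Fourier coefficients all vanish is zero. *)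

theory Submission
  imports Defs
begin

section \<open>Complex exponentials and Fourier coefficients\<close>

definition expi :: "int \<Rightarrow> real \<Rightarrow> complex" where
  "expi n t = exp (\<i> * of_int n * of_real t)"

definition fourier_coeff :: "(real \<Rightarrow> complex) \<Rightarrow> int \<Rightarrow> complex" where
  "fourier_coeff F n = integral {0..2*pi} (\<lambda>t. F t * expi (-n) t) / (2*pi)"

lemma expi_mult: "expi m t * expi n t = expi (m + n) t"
  by (simp add: expi_def exp_add[symmetric] algebra_simps)

lemma expi_0 [simp]: "expi 0 t = 1"
  by (simp add: expi_def)

lemma expi_at_0 [simp]: "expi n 0 = 1"
  by (simp add: expi_def)

lemma expi_add: "expi n (s + t) = expi n s * expi n t"
  by (simp add: expi_def exp_add[symmetric] algebra_simps)

lemma expi_conv_cis: "expi n t = cis (of_int n * t)"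
  by (simp add: expi_def cis_conv_exp mult.assoc)

lemma norm_expi [simp]: "norm (expi n t) = 1"
  by (simp add: expi_conv_cis)

lemma cnj_expi: "cnj (expi n t) = expi (-n) t"
  by (simp add: expi_def exp_cnj)

lemma expi_periodic: "expi n (t + 2*pi) = expi n t"
proof -
  have "exp (2 * pi * of_int n * \<i>) = 1"
    using exp_integer_2pi[of "of_int n"] by (simp add: mult_ac)
  then show ?thesis
    by (simp add: expi_def exp_add[symmetric] algebra_simps)
qed

lemma has_vector_derivative_expi:
  "(expi n has_vector_derivative (\<i> * of_int n * expi n t)) (at t within S)"
proof -
  have "((\<lambda>z. exp (\<i> * of_int n * z)) has_field_derivative
          \<i> * of_int n * exp (\<i> * of_int n * of_real t)) (at (of_real t))"
    by (auto intro!: derivative_eq_intros)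
  from has_vector_derivative_real_field[OF this] show ?thesis
    unfolding expi_def by (auto intro: has_vector_derivative_at_within)
qed

lemma continuous_on_expi [continuous_intros]: "continuous_on S (expi n)"
  unfolding expi_def by (intro continuous_intros)

lemma integral_expi: "integral {0..2*pi} (expi n) = (if n = 0 then 2*pi else 0)"
proof (cases "n = 0")
  case False
  have "((\<lambda>t. \<i> * of_int n * expi n t) has_integral expi n (2*pi) - expi n 0) {0..2*pi}"
    by (intro fundamental_theorem_of_calculus) (auto intro: has_vector_derivative_expi)
  then have "((\<lambda>t. \<i> * of_int n * expi n t) has_integral 0) {0..2*pi}"
    using expi_periodic[of n 0] by simp
  then have "(expi n has_integral 0) {0..2*pi}"
    using has_integral_mult_right[of "\<lambda>t. \<i> * of_int n * expi n t" 0 _ "1 / (\<i> * of_int n)"] False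
    by (simp add: field_simps)
  with False show ?thesis by (simp add: integral_unique)
next
  case True
  have "expi 0 = (\<lambda>_. 1)"
    by (rule ext) simp
  with True show ?thesis
    by (simp add: scaleR_conv_of_real)
qed

lemma integral_expi_mult_expi:
  "integral {0..2*pi} (\<lambda>t. expi m t * expi (-n) t) = (if m = n then 2*pi else 0)"
  using integral_expi[of "m - n"] by (simp add: expi_mult)

lemma periodic_add_of_nat_mult:
  fixes F :: "real \<Rightarrow> 'a"
  assumes "\<And>t. F (t + T) = F t"
  shows "F (t + real m * T) = F t"
proof (induction m)
  case (Suc m)
  have "F (t + real (Suc m) * T) = F ((t + real m * T) + T)"
    by (simp add: algebra_simps)
  with assms Suc show ?case by simp
qed simp

lemma periodic_add_of_int_mult:
  fixes F :: "real \<Rightarrow> 'a"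
  assumes "\<And>t. F (t + T) = F t"
  shows "F (t + of_int m * T) = F t"
proof (cases "m \<ge> 0")
  case True
  then show ?thesis
    using periodic_add_of_nat_mult[where F=F and T=T and m="nat m", OF assms] by simp
next
  case False
  have "F ((t + of_int m * T) + real (nat (-m)) * T) = F (t + of_int m * T)"
    by (rule periodic_add_of_nat_mult[where F=F and T=T, OF assms])
  with False show ?thesis by simp
qed

lemma periodic_eq_if_exp_eq:
  fixes F :: "real \<Rightarrow> 'a"
  assumes "\<And>t. F (t + 2*pi) = F t" and "exp (\<i> * of_real a) = exp (\<i> * of_real b)"
  shows "F a = F b"
proof -
  obtain n :: int where "\<i> * of_real a = \<i> * of_real b + (of_int (2 * n) * pi) * \<i>"
    using assms(2) exp_eq by blast
  then have "a = b + of_int n * (2*pi)"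
    by (auto simp: complex_eq_iff)
  then show ?thesis
    using periodic_add_of_int_mult[of F "2*pi", OF assms(1)] by simp
qed

lemma has_real_derivative_periodic:
  assumes "\<And>t. f (t + T) = f t" and "\<And>x. (f has_real_derivative f' x) (at x)"
  shows "f' (t + T) = f' t"
proof -
  have "((\<lambda>x. f (x + T)) has_real_derivative f' (t + T)) (at t)"
    using DERIV_shift[THEN iffD1, OF assms(2)[of "t + T"]] .
  then have "(f has_real_derivative f' (t + T)) (at t)"
    using assms(1) by simp
  then show ?thesis
    using assms(2) DERIV_unique by blast
qed

lemma integral_periodic_shift:
  fixes Q :: "real \<Rightarrow> 'a::banach"
  assumes T: "T > 0" and per: "\<And>t. Q (t + T) = Q t" and cont: "continuous_on UNIV Q"
  shows "integral {0..T} (\<lambda>s. Q (s + c)) = integral {0..T} Q"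
proof -
  define c0 where "c0 = c - of_int \<lfloor>c / T\<rfloor> * T"
  have c0: "0 \<le> c0" "c0 \<le> T"
    using T floor_divide_lower[OF T, of c] floor_divide_upper[OF T, of c]
    unfolding c0_def by (simp_all add: algebra_simps)
  have int: "Q integrable_on {a..b}" for a b
    by (intro integrable_continuous_interval continuous_on_subset[OF cont]) auto
  have "(\<lambda>s. Q (s + c)) = (\<lambda>s. Q (s + c0))"
  proof
    fix s
    have "Q (s + c) = Q ((s + c0) + of_int \<lfloor>c / T\<rfloor> * T)"
      unfolding c0_def by simp
    then show "Q (s + c) = Q (s + c0)"
      using periodic_add_of_int_mult[of Q T, OF per] by simp
  qed
  then have "integral {0..T} (\<lambda>s. Q (s + c)) = integral {c0..c0 + T} Q"
    using integral_shift_real_ivl[where a=c0 and b="c0 + T" and c=c0 and f=Q] by simp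
  also have "\<dots> = integral {c0..T} Q + integral {T..c0 + T} Q"
    using Henstock_Kurzweil_Integration.integral_combine[where a=c0 and c=T and b="c0 + T" and f=Q] c0 int by simp
  also have "integral {T..c0 + T} Q = integral {0..c0} Q"
    using integral_shift_real_ivl[where a=T and b="c0 + T" and c=T and f=Q] per by simp
  also have "integral {c0..T} Q + integral {0..c0} Q = integral {0..T} Q"
    using Henstock_Kurzweil_Integration.integral_combine[where a=0 and c=c0 and b=T and f=Q] c0 int by (simp add: add.commute)
  finally show ?thesis .
qed

lemma integral_periodic_multiple:
  fixes Q :: "real \<Rightarrow> 'a::banach"
  assumes T: "T > 0" and per: "\<And>t. Q (t + T) = Q t" and cont: "continuous_on UNIV Q"
  shows "integral {0..real m * T} Q = real m *\<^sub>R integral {0..T} Q"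
proof (induction m)
  case (Suc m)
  have int: "Q integrable_on {a..b}" for a b
    by (intro integrable_continuous_interval continuous_on_subset[OF cont]) auto
  have "integral {0..real (Suc m) * T} Q = integral {0..real m * T} Q + integral {real m * T..real m * T + T} Q"
    using Henstock_Kurzweil_Integration.integral_combine[where a=0 and c="real m * T" and b="real m * T + T" and f=Q] T int
    by (simp add: algebra_simps)
  also have "integral {real m * T..real m * T + T} Q = integral {0..T} (\<lambda>x. Q (x + real m * T))"
    using integral_shift_real_ivl[where a="real m * T" and b="real m * T + T" and c="real m * T" and f=Q]
    by simp
  also have "\<dots> = integral {0..T} Q"
    using periodic_add_of_nat_mult[of Q T, OF per] by simp
  finally show ?case
    using Suc.IH by (simp add: algebra_simps)
qed simp

lemma fourier_coeff_deriv:
  assumes deriv: "\<And>t. (F has_vector_derivative F' t) (at t)" and per: "F (2*pi) = F 0"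
  shows "fourier_coeff F' n = \<i> * of_int n * fourier_coeff F n"
proof -
  define I where "I = integral {0..2*pi} (\<lambda>t. F t * expi (-n) t)"
  have cont: "continuous_on {0..2*pi} F"
    using deriv continuous_at_imp_continuous_on has_vector_derivative_continuous by blast
  have "((\<lambda>t. F t * expi (-n) t) has_integral I) {0..2*pi}"
    unfolding I_def by (intro integrable_integral integrable_continuous_interval continuous_intros cont)
  then have "((\<lambda>t. (- \<i> * of_int n) * (F t * expi (-n) t)) has_integral (- \<i> * of_int n) * I) {0..2*pi}"
    by (rule has_integral_mult_right)
  then have "((\<lambda>t. F t * (\<i> * of_int (-n) * expi (-n) t)) has_integral
      F (2*pi) * expi (-n) (2*pi) - F 0 * expi (-n) 0 - \<i> * of_int n * I) {0..2*pi}"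
    using per expi_periodic[of "-n" 0] by (simp add: algebra_simps)
  from integration_by_parts[OF bounded_bilinear_mult _ cont continuous_on_expi deriv has_vector_derivative_expi this]
  have "((\<lambda>t. F' t * expi (-n) t) has_integral \<i> * of_int n * I) {0..2*pi}"
    by simp
  then show ?thesis
    unfolding fourier_coeff_def I_def by (simp add: integral_unique)
qed

lemma fourier_coeff_shift:
  assumes cont: "continuous_on UNIV F" and per: "\<And>t. F (t + 2*pi) = F t"
  shows "fourier_coeff (\<lambda>s. F (s + c)) n = expi n c * fourier_coeff F n"
proof -
  define Q where "Q s = F s * expi (-n) s" for s
  have "F (s + c) * expi (-n) s = expi n c * Q (s + c)" for s
  proof -
    have "expi n c * expi (-n) (s + c) = expi (-n) s"
      by (simp add: expi_add expi_mult mult.commute mult.left_commute)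
    then show ?thesis
      unfolding Q_def by (metis mult.left_commute)
  qed
  then have "integral {0..2*pi} (\<lambda>s. F (s + c) * expi (-n) s) = expi n c * integral {0..2*pi} (\<lambda>s. Q (s + c))"
    by (simp add: integral_mult_right)
  also have "integral {0..2*pi} (\<lambda>s. Q (s + c)) = integral {0..2*pi} Q"
    by (rule integral_periodic_shift) (auto simp: Q_def per expi_periodic intro!: continuous_intros cont)
  finally show ?thesis
    unfolding fourier_coeff_def Q_def by simp
qed

lemma fourier_coeff_mult_expi: "fourier_coeff (\<lambda>t. F t * expi m t) n = fourier_coeff F (n - m)"
proof -
  have "(\<lambda>t. F t * expi m t * expi (-n) t) = (\<lambda>t. F t * expi (- (n - m)) t)"
    by (rule ext) (simp add: mult.assoc expi_mult)
  then show ?thesis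
    unfolding fourier_coeff_def by simp
qed

lemma fourier_coeff_of_real_uminus:
  "fourier_coeff (\<lambda>t. of_real (f t)) (-n) = cnj (fourier_coeff (\<lambda>t. of_real (f t)) n)"
  unfolding fourier_coeff_def by (simp add: integral_cnj cnj_expi)

lemma fourier_coeff_diff:
  assumes "continuous_on {0..2*pi} F" "continuous_on {0..2*pi} G"
  shows "fourier_coeff (\<lambda>t. F t - G t) n = fourier_coeff F n - fourier_coeff G n"
proof -
  have "integral {0..2*pi} (\<lambda>t. (F t - G t) * expi (-n) t)
      = integral {0..2*pi} (\<lambda>t. F t * expi (-n) t) - integral {0..2*pi} (\<lambda>t. G t * expi (-n) t)"
    unfolding left_diff_distrib
    by (intro integral_diff integrable_continuous_interval continuous_intros assms)
  then show ?thesis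
    unfolding fourier_coeff_def by (simp add: diff_divide_distrib)
qed

lemma fourier_coeff_const_mult_sum:
  assumes "finite J" and "\<And>j. j \<in> J \<Longrightarrow> continuous_on {0..2*pi} (F j)"
  shows "fourier_coeff (\<lambda>t. a * (\<Sum>j\<in>J. F j t)) n = a * (\<Sum>j\<in>J. fourier_coeff (F j) n)"
proof -
  have "integral {0..2*pi} (\<lambda>t. a * (\<Sum>j\<in>J. F j t) * expi (-n) t)
      = a * integral {0..2*pi} (\<lambda>t. \<Sum>j\<in>J. F j t * expi (-n) t)"
    by (simp add: sum_distrib_right mult.assoc)
  also have "integral {0..2*pi} (\<lambda>t. \<Sum>j\<in>J. F j t * expi (-n) t)
      = (\<Sum>j\<in>J. integral {0..2*pi} (\<lambda>t. F j t * expi (-n) t))"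
    using assms by (intro integral_sum integrable_continuous_interval continuous_intros) auto
  finally show ?thesis
    unfolding fourier_coeff_def by (simp add: sum_divide_distrib sum_distrib_left)
qed

lemma norm_fourier_coeff_le:
  assumes cont: "continuous_on {0..2*pi} F" and bound: "\<And>t. t \<in> {0..2*pi} \<Longrightarrow> norm (F t) \<le> B"
  shows "norm (fourier_coeff F n) \<le> B"
proof -
  have "norm (F 0) \<le> B"
    using bound by simp
  then have B: "0 \<le> B"
    by (meson norm_ge_zero order_trans)
  have int: "((\<lambda>t. F t * expi (-n) t) has_integral integral {0..2*pi} (\<lambda>t. F t * expi (-n) t)) (cbox 0 (2*pi))"
    using cont by (auto intro!: integrable_integral integrable_continuous_interval continuous_intros)
  have "norm (F t * expi (-n) t) \<le> B" if "t \<in> cbox 0 (2*pi)" for t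
    using bound that by (simp add: norm_mult)
  from has_integral_bound[OF B int this]
  have "norm (integral {0..2*pi} (\<lambda>t. F t * expi (-n) t)) \<le> B * (2*pi)"
    by simp
  then show ?thesis
    unfolding fourier_coeff_def by (simp add: norm_divide field_simps)
qed

lemma norm_fourier_coeff_of_real:
  assumes cont: "continuous_on UNIV f" and "M \<ge> 1"
  shows "4 * (norm (fourier_coeff (\<lambda>t. of_real (f t)) (int M)))\<^sup>2 = (fourier_a f M)\<^sup>2 + (fourier_b f M)\<^sup>2"
proof -
  define g where "g t = of_real (f t) * expi (- int M) t" for t
  define I where "I = integral {0..2*pi} g"
  have g: "(g has_integral I) {0..2*pi}"
    unfolding I_def g_def using cont
    by (intro integrable_integral integrable_continuous_interval continuous_intros continuous_on_of_real)
      (auto intro: continuous_on_subset)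
  have "(\<lambda>t. Re (g t)) = (\<lambda>t. f t * cos (real M * t))"
    by (rule ext) (simp add: g_def expi_conv_cis)
  with has_integral_Re[OF g] have Re: "Re I = integral {0..2*pi} (\<lambda>t. f t * cos (real M * t))"
    by (simp add: integral_unique)
  have "(\<lambda>t. Im (g t)) = (\<lambda>t. - (f t * sin (real M * t)))"
    by (rule ext) (simp add: g_def expi_conv_cis)
  with has_integral_Im[OF g] have Im: "Im I = - integral {0..2*pi} (\<lambda>t. f t * sin (real M * t))"
    by (metis integral_neg integral_unique neg_equal_iff_equal has_integral_neg_iff)
  have "4 * (norm (fourier_coeff (\<lambda>t. of_real (f t)) (int M)))\<^sup>2 = 4 * (norm (I / (2*pi)))\<^sup>2"
    by (simp add: fourier_coeff_def I_def g_def[abs_def])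
  also have "\<dots> = ((Re I)\<^sup>2 + (Im I)\<^sup>2) / pi\<^sup>2"
    by (simp add: norm_divide cmod_power2 power_divide field_simps)
  also have "\<dots> = (fourier_a f M)\<^sup>2 + (fourier_b f M)\<^sup>2"
    using \<open>M \<ge> 1\<close> unfolding fourier_a_def fourier_b_def Re Im
    by (simp add: power2_eq_square field_simps)
  finally show ?thesis .
qed

lemma summable_on_inverse_power2_int: "(\<lambda>n::int. inverse ((of_int n)\<^sup>2 :: real)) summable_on UNIV"
proof -
  have "(\<lambda>n::int. inverse ((of_int n)\<^sup>2 :: real)) summable_on range int"
    using inverse_power_summable[of 2, where 'a=real]
    by (subst summable_on_reindex) (auto intro!: norm_summable_imp_summable_on simp: o_def)
  moreover have "(\<lambda>n::int. inverse ((of_int n)\<^sup>2 :: real)) summable_on uminus ` range int"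
    using calculation by (subst summable_on_reindex) (auto simp: o_def)
  moreover have "x \<in> range int \<union> uminus ` range int" for x :: int
    by (cases x rule: int_cases2) auto
  then have "(UNIV :: int set) = range int \<union> uminus ` range int"
    by blast
  ultimately show ?thesis
    by (metis summable_on_union)
qed

text \<open>Two periodic derivatives give the decay |c(n)| \<le> B / n^2.\<close>

lemma summable_norm_fourier_coeff:
  assumes deriv: "\<And>t. (F has_vector_derivative F' t) (at t)"
    and deriv': "\<And>t. (F' has_vector_derivative F'' t) (at t)"
    and cont'': "continuous_on {0..2*pi} F''"
    and per: "F (2*pi) = F 0" and per': "F' (2*pi) = F' 0"
  shows "(\<lambda>n. norm (fourier_coeff F n)) summable_on UNIV"
proof -
  have "bounded (F'' ` {0..2*pi})"
    by (intro compact_imp_bounded compact_continuous_image cont'') auto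
  then obtain B where B: "\<And>t. t \<in> {0..2*pi} \<Longrightarrow> norm (F'' t) \<le> B"
    unfolding bounded_iff by blast
  define M where "M n = B * inverse ((of_int n)\<^sup>2) + (if n = 0 then norm (fourier_coeff F 0) else 0)"
    for n :: int
  have "(\<lambda>n::int. if n = 0 then norm (fourier_coeff F 0) else 0) summable_on UNIV"
    by (rule has_sum_imp_summable[OF has_sum_finite_neutralI[of "{0}"]]) auto
  then have "M summable_on UNIV"
    unfolding M_def by (rule summable_on_add[OF summable_on_cmult_right[OF summable_on_inverse_power2_int]])
  moreover have "norm (fourier_coeff F n) \<le> M n" for n
  proof (cases "n = 0")
    case False
    have "fourier_coeff F'' n = - (of_int n)\<^sup>2 * fourier_coeff F n"
      using fourier_coeff_deriv[OF deriv' per'] fourier_coeff_deriv[OF deriv per]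
      by (simp add: power2_eq_square algebra_simps)
    then have "(of_int n)\<^sup>2 * norm (fourier_coeff F n) \<le> B"
      using norm_fourier_coeff_le[OF cont'' B, of n] by (simp add: norm_mult norm_power)
    with False show ?thesis
      by (simp add: M_def field_simps)
  qed (simp add: M_def)
  ultimately show ?thesis
    by (rule summable_on_comparison_test) simp_all
qed

section \<open>Uniqueness of Fourier coefficients\<close>

inductive_set trig_poly :: "(real \<Rightarrow> complex) set" where
  trig_poly_expi: "expi n \<in> trig_poly"
| trig_poly_scale: "\<phi> \<in> trig_poly \<Longrightarrow> (\<lambda>t. c * \<phi> t) \<in> trig_poly"
| trig_poly_add: "\<phi> \<in> trig_poly \<Longrightarrow> \<psi> \<in> trig_poly \<Longrightarrow> (\<lambda>t. \<phi> t + \<psi> t) \<in> trig_poly"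

lemma trig_poly_const: "(\<lambda>t. c) \<in> trig_poly"
  using trig_poly_scale[OF trig_poly_expi[of 0], of c] by simp

lemma trig_poly_mult_expi: "\<psi> \<in> trig_poly \<Longrightarrow> (\<lambda>t. expi n t * \<psi> t) \<in> trig_poly"
proof (induction rule: trig_poly.induct)
  case (trig_poly_expi m)
  then show ?case
    using trig_poly.trig_poly_expi[of "n + m"] by (simp add: expi_mult)
next
  case (trig_poly_scale \<phi> c)
  then show ?case
    using trig_poly.trig_poly_scale[OF trig_poly_scale.IH, of c] by (simp add: mult.left_commute)
next
  case (trig_poly_add \<phi> \<psi>)
  then show ?case
    using trig_poly.trig_poly_add[OF trig_poly_add.IH] by (simp add: distrib_left)
qed

lemma trig_poly_mult: "\<phi> \<in> trig_poly \<Longrightarrow> \<psi> \<in> trig_poly \<Longrightarrow> (\<lambda>t. \<phi> t * \<psi> t) \<in> trig_poly"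
proof (induction rule: trig_poly.induct)
  case (trig_poly_expi m)
  then show ?case
    by (rule trig_poly_mult_expi)
next
  case (trig_poly_scale \<phi> c)
  then show ?case
    using trig_poly.trig_poly_scale[OF trig_poly_scale.IH, of c] by (simp add: mult.assoc)
next
  case (trig_poly_add \<phi>1 \<phi>2)
  then show ?case
    using trig_poly.trig_poly_add[OF trig_poly_add.IH] by (simp add: distrib_right)
qed

lemma bounded_linear_complex_to_real:
  fixes p :: "complex \<Rightarrow> real"
  assumes "bounded_linear p"
  shows "p w = Re w * p 1 + Im w * p \<i>"
proof -
  have "w = Re w *\<^sub>R 1 + Im w *\<^sub>R \<i>"
    by (simp add: complex_eq_iff)
  then have "p w = p (Re w *\<^sub>R 1 + Im w *\<^sub>R \<i>)"
    by (rule arg_cong)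
  also have "\<dots> = Re w * p 1 + Im w * p \<i>"
    using bounded_linear.linear[OF assms] by (simp add: linear_add linear_scale)
  finally show ?thesis .
qed

lemma trig_poly_real_polynomial:
  assumes "real_polynomial_function p"
  shows "(\<lambda>t. of_real (p (expi 1 t))) \<in> trig_poly"
  using assms
proof (induction rule: real_polynomial_function.induct)
  case (linear p)
  define \<alpha> where "\<alpha> = (of_real (p 1) - \<i> * of_real (p \<i>)) / 2"
  define \<beta> where "\<beta> = (of_real (p 1) + \<i> * of_real (p \<i>)) / 2"
  have "p (expi 1 t) = cos t * p 1 + sin t * p \<i>" for t
    using bounded_linear_complex_to_real[OF linear, of "expi 1 t"] by (simp add: expi_conv_cis)
  then have "of_real (p (expi 1 t)) = \<alpha> * expi 1 t + \<beta> * expi (-1) t" for t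
    unfolding \<alpha>_def \<beta>_def expi_conv_cis
    by (simp add: complex_eq_iff algebra_simps add_divide_distrib[symmetric])
  then have "(\<lambda>t. of_real (p (expi 1 t))) = (\<lambda>t. \<alpha> * expi 1 t + \<beta> * expi (-1) t)"
    by (rule ext)
  then show ?case
    using trig_poly_add[OF trig_poly_scale[OF trig_poly_expi[of 1]] trig_poly_scale[OF trig_poly_expi[of "-1"]], of \<alpha> \<beta>]
    by simp
next
  case (const c)
  then show ?case
    by (rule trig_poly_const)
next
  case (add f g)
  then show ?case
    using trig_poly_add[OF add.IH] by simp
next
  case (mult f g)
  then show ?case
    using trig_poly_mult[OF mult.IH] by simp
qed

lemma trig_poly_polynomial:
  assumes "polynomial_function g"
  shows "(\<lambda>t. g (expi 1 t)) \<in> trig_poly"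
proof -
  have Re: "real_polynomial_function (Re \<circ> g)" and Im: "real_polynomial_function (Im \<circ> g)"
    using assms unfolding polynomial_function_def by (auto simp: bounded_linear_Re bounded_linear_Im)
  have "(\<lambda>t. g (expi 1 t)) = (\<lambda>t. of_real ((Re \<circ> g) (expi 1 t)) + \<i> * of_real ((Im \<circ> g) (expi 1 t)))"
    by (rule ext) (simp add: complex_eq_iff)
  then show ?thesis
    using trig_poly_add[OF trig_poly_real_polynomial[OF Re] trig_poly_scale[OF trig_poly_real_polynomial[OF Im]]]
    by simp
qed

lemma continuous_on_trig_poly: "\<phi> \<in> trig_poly \<Longrightarrow> continuous_on S \<phi>"
  by (induction rule: trig_poly.induct) (auto intro: continuous_intros)

lemma integral_cnj_mult_trig_poly:
  assumes cont: "continuous_on {0..2*pi} F" and coeffs: "\<And>n. fourier_coeff F n = 0"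
    and "\<phi> \<in> trig_poly"
  shows "integral {0..2*pi} (\<lambda>t. cnj (F t) * \<phi> t) = 0"
  using assms(3)
proof (induction rule: trig_poly.induct)
  case (trig_poly_expi n)
  have "integral {0..2*pi} (\<lambda>t. cnj (F t) * expi n t) = cnj (2*pi * fourier_coeff F n)"
    by (simp add: fourier_coeff_def integral_cnj cnj_expi)
  with coeffs show ?case
    by simp
next
  case (trig_poly_scale \<phi> c)
  then show ?case
    by (simp add: mult.left_commute[of "cnj (F _)"] integral_mult_right)
next
  case (trig_poly_add \<phi> \<psi>)
  have "(\<lambda>t. cnj (F t) * \<xi> t) integrable_on {0..2*pi}" if "\<xi> \<in> trig_poly" for \<xi>
    using that by (intro integrable_continuous_interval continuous_intros cont continuous_on_trig_poly)
  with trig_poly_add show ?case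
    by (simp add: distrib_left integral_add)
qed

lemma continuous_on_sphere_comp_Arg:
  fixes F :: "real \<Rightarrow> 'a::topological_space"
  assumes cont: "continuous_on UNIV F" and per: "\<And>t. F (t + 2*pi) = F t"
  shows "continuous_on (sphere 0 1) (\<lambda>w. F (Arg w))"
proof -
  have isCont: "isCont F x" for x
    using cont by (simp add: continuous_on_eq_continuous_at)
  have Arg_Arg2pi: "F (Arg w) = F (Arg2pi w)" if "w \<in> sphere 0 1" for w
  proof (rule periodic_eq_if_exp_eq[of F, OF per])
    have w: "w \<noteq> 0" "norm w = 1"
      using that by auto
    have "w = exp (\<i> * Arg w)"
      using Arg_eq[OF w(1)] w(2) by simp
    moreover have "w = exp (\<i> * Arg2pi w)"
      using Arg2pi[of w] w(2) unfolding is_Arg_def by simp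
    ultimately show "exp (\<i> * of_real (Arg w)) = exp (\<i> * of_real (Arg2pi w))"
      by simp
  qed
  show ?thesis
    unfolding continuous_on_eq_continuous_within
  proof
    fix w :: complex
    assume w: "w \<in> sphere 0 1"
    show "continuous (at w within sphere 0 1) (\<lambda>w. F (Arg w))"
    proof (cases "w \<in> \<real>\<^sub>\<le>\<^sub>0")
      case False
      then have "isCont (\<lambda>w. F (Arg w)) w"
        by (intro continuous_at_compose[OF continuous_at_Arg[OF False], unfolded o_def] isCont)
      then show ?thesis
        by (rule continuous_at_imp_continuous_within)
    next
      case True
      \<comment> \<open>Arg jumps at w = -1, where Arg2pi is continuous.\<close>
      with w have "w = -1"
        using cmod_eq_Re[of w] by (auto simp: complex_nonpos_Reals_iff complex_eq_iff)
      then have "w \<notin> \<real>\<^sub>\<ge>\<^sub>0"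
        by (auto simp: complex_nonneg_Reals_iff)
      then have "isCont (\<lambda>w. F (Arg2pi w)) w"
        by (intro continuous_at_compose[OF continuous_at_Arg2pi, unfolded o_def] isCont)
      then have "continuous (at w within sphere 0 1) (\<lambda>w. F (Arg2pi w))"
        by (rule continuous_at_imp_continuous_within)
      then show ?thesis
        by (rule continuous_transform_within[where \<delta>=1]) (use w Arg_Arg2pi in auto)
    qed
  qed
qed

lemma comp_Arg_expi:
  fixes F :: "real \<Rightarrow> 'a"
  assumes per: "\<And>t. F (t + 2*pi) = F t"
  shows "F (Arg (expi 1 t)) = F t"
proof (rule periodic_eq_if_exp_eq[of F, OF per])
  have "expi 1 t \<noteq> 0"
    using norm_expi[of 1 t] by (metis norm_zero zero_neq_one)
  from Arg_eq[OF this] show "exp (\<i> * of_real (Arg (expi 1 t))) = exp (\<i> * of_real t)"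
    by (simp add: expi_def)
qed

text \<open>Stone-Weierstrass on the unit circle, pulled back along t \<mapsto> e^(it).\<close>

lemma trig_poly_approx:
  assumes cont: "continuous_on UNIV F" and per: "\<And>t. F (t + 2*pi) = F t" and "e > 0"
  obtains \<phi> where "\<phi> \<in> trig_poly" and "\<And>t. norm (F t - \<phi> t) < e"
proof -
  obtain g where "polynomial_function g" and g: "\<And>w. w \<in> sphere 0 1 \<Longrightarrow> norm (F (Arg w) - g w) < e"
    using Stone_Weierstrass_polynomial_function[OF compact_sphere
        continuous_on_sphere_comp_Arg[OF cont per] \<open>e > 0\<close>] by blast
  show ?thesis
  proof
    show "(\<lambda>t. g (expi 1 t)) \<in> trig_poly"
      by (rule trig_poly_polynomial) fact
    show "norm (F t - g (expi 1 t)) < e" for t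
      using g[of "expi 1 t"] comp_Arg_expi[of F, OF per, of t] by simp
  qed
qed

text \<open>A function orthogonal to all trigonometric polynomials is orthogonal to itself, up to the
  distance to any one of them.\<close>

lemma integral_norm_power2_le_dist_trig_poly:
  fixes F :: "real \<Rightarrow> complex"
  assumes cont: "continuous_on {0..2*pi} F" and coeffs: "\<And>n. fourier_coeff F n = 0"
    and "\<phi> \<in> trig_poly" and "0 \<le> B" and bound: "\<And>t. t \<in> {0..2*pi} \<Longrightarrow> norm (F t) \<le> B"
    and close: "\<And>t. t \<in> {0..2*pi} \<Longrightarrow> norm (F t - \<phi> t) \<le> e"
  shows "integral {0..2*pi} (\<lambda>t. (norm (F t))\<^sup>2) \<le> 2*pi * B * e"
proof -
  define E where "E = integral {0..2*pi} (\<lambda>t. cnj (F t) * (F t - \<phi> t))"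
  have cont_\<phi>: "continuous_on {0..2*pi} \<phi>"
    using \<open>\<phi> \<in> trig_poly\<close> by (rule continuous_on_trig_poly)
  have int_E: "((\<lambda>t. cnj (F t) * (F t - \<phi> t)) has_integral E) {0..2*pi}"
    unfolding E_def by (intro integrable_integral integrable_continuous_interval continuous_intros cont cont_\<phi>)
  have "((\<lambda>t. cnj (F t) * \<phi> t) has_integral 0) {0..2*pi}"
    using integral_cnj_mult_trig_poly[OF cont coeffs \<open>\<phi> \<in> trig_poly\<close>]
      integrable_continuous_interval[of 0 "2*pi" "\<lambda>t. cnj (F t) * \<phi> t"]
    by (metis continuous_on_mult continuous_on_cnj cont cont_\<phi> has_integral_integral)
  from has_integral_add[OF int_E this]
  have "((\<lambda>t. cnj (F t) * F t) has_integral E) {0..2*pi}"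
    by (simp add: algebra_simps)
  moreover have "(\<lambda>t. (norm (F t))\<^sup>2) integrable_on {0..2*pi}"
    by (intro integrable_continuous_interval continuous_intros cont)
  from has_integral_of_real[OF integrable_integral[OF this], where 'b=complex]
  have "((\<lambda>t. cnj (F t) * F t) has_integral of_real (integral {0..2*pi} (\<lambda>t. (norm (F t))\<^sup>2))) {0..2*pi}"
    by (simp add: complex_norm_square mult.commute del: of_real_power)
  ultimately have "of_real (integral {0..2*pi} (\<lambda>t. (norm (F t))\<^sup>2)) = E"
    by (rule has_integral_unique[rotated])
  then have "integral {0..2*pi} (\<lambda>t. (norm (F t))\<^sup>2) \<le> norm E"
    using abs_ge_self norm_of_real by metis
  also have "norm E \<le> B * e * (2*pi)"
  proof -
    have "norm (F 0 - \<phi> 0) \<le> e"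
      using close by simp
    then have "0 \<le> B * e"
      using \<open>0 \<le> B\<close> norm_ge_zero order_trans by (metis mult_nonneg_nonneg)
    moreover have "norm (cnj (F t) * (F t - \<phi> t)) \<le> B * e" if "t \<in> cbox 0 (2*pi)" for t
      using bound[of t] close[of t] that \<open>0 \<le> B\<close> by (simp add: norm_mult mult_mono')
    ultimately show ?thesis
      using has_integral_bound[OF _ int_E[unfolded interval_cbox]] by simp
  qed
  finally show ?thesis
    by (simp add: algebra_simps)
qed

lemma fourier_coeff_eq_0_imp_eq_0:
  fixes F :: "real \<Rightarrow> complex"
  assumes cont: "continuous_on UNIV F" and per: "\<And>t. F (t + 2*pi) = F t"
    and coeffs: "\<And>n. fourier_coeff F n = 0" and t: "t \<in> {0..2*pi}"
  shows "F t = 0"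
proof -
  have cont': "continuous_on {0..2*pi} F"
    using cont by (rule continuous_on_subset) simp
  define I where "I = integral {0..2*pi} (\<lambda>t. (norm (F t))\<^sup>2)"
  have int: "((\<lambda>t. (norm (F t))\<^sup>2) has_integral I) {0..2*pi}"
    unfolding I_def by (intro integrable_integral integrable_continuous_interval continuous_intros cont')
  obtain B where B: "B > 0" "\<And>t. t \<in> {0..2*pi} \<Longrightarrow> norm (F t) \<le> B"
    using compact_imp_bounded[OF compact_continuous_image[OF cont' compact_Icc]]
    unfolding bounded_pos by blast
  have "I \<le> 0 + e" if "e > 0" for e
  proof -
    obtain \<phi> where "\<phi> \<in> trig_poly" and "\<And>t. norm (F t - \<phi> t) < e / (2*pi*B)"
      using trig_poly_approx[OF cont per, of "e / (2*pi*B)"] B(1) \<open>e > 0\<close> by auto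
    then have "I \<le> 2*pi * B * (e / (2*pi*B))"
      unfolding I_def using B
      by (intro integral_norm_power2_le_dist_trig_poly[OF cont' coeffs]) (auto intro: less_imp_le)
    with B(1) show ?thesis
      by simp
  qed
  then have "I \<le> 0"
    by (rule field_le_epsilon)
  moreover have "I \<ge> 0"
    using int by (rule has_integral_nonneg) simp
  ultimately have "((\<lambda>t. (norm (F t))\<^sup>2) has_integral 0) {0..2*pi}"
    using int by simp
  then have "(norm (F t))\<^sup>2 = 0"
    using has_integral_0_cbox_imp_0[of 0 "2*pi" "\<lambda>t. (norm (F t))\<^sup>2" t] t pi_gt_zero
    by (simp add: continuous_intros cont')
  then show ?thesis
    by simp
qed

section \<open>Fourier series and Parseval's identity\<close>

lemma has_sum_integral_uniform_limit:
  fixes f :: "'i \<Rightarrow> real \<Rightarrow> 'a::banach"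
  assumes lim: "uniform_limit {a..b} (\<lambda>X t. \<Sum>n\<in>X. f n t) g (finite_subsets_at_top UNIV)"
    and cont: "\<And>n. continuous_on {a..b} (f n)"
  shows "((\<lambda>n. integral {a..b} (f n)) has_sum integral {a..b} g) UNIV"
proof -
  obtain I J where I: "\<And>X. ((\<lambda>t. \<Sum>n\<in>X. f n t) has_integral I X) {a..b}"
    and J: "(g has_integral J) {a..b}" and I_J: "(I \<longlongrightarrow> J) (finite_subsets_at_top UNIV)"
    using uniform_limit_integral[OF lim continuous_on_sum[OF cont]] by auto
  have "\<forall>\<^sub>F X in finite_subsets_at_top UNIV. I X = (\<Sum>n\<in>X. integral {a..b} (f n))"
  proof (rule eventually_finite_subsets_at_top_weakI)
    fix X :: "'i set"
    assume "finite X"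
    then have "((\<lambda>t. \<Sum>n\<in>X. f n t) has_integral (\<Sum>n\<in>X. integral {a..b} (f n))) {a..b}"
      by (intro has_integral_sum integrable_integral integrable_continuous_interval cont)
    then show "I X = (\<Sum>n\<in>X. integral {a..b} (f n))"
      using I[of X] by (rule has_integral_unique[rotated])
  qed
  with I_J have "((\<lambda>X. \<Sum>n\<in>X. integral {a..b} (f n)) \<longlongrightarrow> J) (finite_subsets_at_top UNIV)"
    by (simp add: tendsto_cong)
  then show ?thesis
    unfolding has_sum_def using J integral_unique by metis
qed

definition fourier_series :: "(int \<Rightarrow> complex) \<Rightarrow> real \<Rightarrow> complex" where
  "fourier_series c t = (\<Sum>\<^sub>\<infinity>n. c n * expi n t)"

context
  fixes c :: "int \<Rightarrow> complex"
  assumes summable: "(\<lambda>n. norm (c n)) summable_on UNIV"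
begin

lemma has_sum_fourier_series: "((\<lambda>n. c n * expi n t) has_sum fourier_series c t) UNIV"
  unfolding fourier_series_def
  by (rule has_sum_infsum[OF abs_summable_summable]) (use summable in \<open>simp add: norm_mult\<close>)

lemma continuous_on_fourier_series: "continuous_on UNIV (fourier_series c)"
proof (rule uniform_limit_theorem)
  show "uniform_limit UNIV (\<lambda>X t. \<Sum>n\<in>X. c n * expi n t) (fourier_series c) (finite_subsets_at_top UNIV)"
    by (rule Weierstrass_m_test_general'[OF _ has_sum_fourier_series summable]) (simp add: norm_mult)
qed (auto intro!: always_eventually continuous_intros)

lemma fourier_series_periodic: "fourier_series c (t + 2*pi) = fourier_series c t"
  by (simp add: fourier_series_def expi_periodic)

lemma fourier_coeff_fourier_series: "fourier_coeff (fourier_series c) m = c m"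
proof -
  have "((\<lambda>n. c n * expi n t * expi (-m) t) has_sum fourier_series c t * expi (-m) t) UNIV" for t
    by (rule has_sum_cmult_left[OF has_sum_fourier_series])
  from Weierstrass_m_test_general'[OF _ this summable]
  have "uniform_limit {0..2*pi} (\<lambda>X t. \<Sum>n\<in>X. c n * expi n t * expi (-m) t)
      (\<lambda>t. fourier_series c t * expi (-m) t) (finite_subsets_at_top UNIV)"
    by (simp add: norm_mult)
  then have "((\<lambda>n. integral {0..2*pi} (\<lambda>t. c n * expi n t * expi (-m) t)) has_sum
      integral {0..2*pi} (\<lambda>t. fourier_series c t * expi (-m) t)) UNIV"
    by (rule has_sum_integral_uniform_limit) (intro continuous_intros)
  moreover have "integral {0..2*pi} (\<lambda>t. c n * expi n t * expi (-m) t) = (if n = m then c m * (2*pi) else 0)" for n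
    by (simp add: mult.assoc integral_mult_right integral_expi_mult_expi)
  moreover have "((\<lambda>n. if n = m then c m * (2*pi) else 0) has_sum (c m * (2*pi))) UNIV"
    by (rule has_sum_finite_neutralI[of "{m}"]) auto
  ultimately have "integral {0..2*pi} (\<lambda>t. fourier_series c t * expi (-m) t) = c m * (2*pi)"
    using has_sum_unique by simp
  then show ?thesis
    unfolding fourier_coeff_def by simp
qed

end

lemma fourier_series_fourier_coeff:
  assumes cont: "continuous_on UNIV F" and per: "\<And>t. F (t + 2*pi) = F t"
    and summable: "(\<lambda>n. norm (fourier_coeff F n)) summable_on UNIV" and t: "t \<in> {0..2*pi}"
  shows "F t = fourier_series (fourier_coeff F) t"
proof -
  let ?S = "fourier_series (fourier_coeff F)"
  have "(\<lambda>t. F t - ?S t) t = 0"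
  proof (rule fourier_coeff_eq_0_imp_eq_0[OF _ _ _ t])
    show "continuous_on UNIV (\<lambda>t. F t - ?S t)"
      by (intro continuous_intros cont continuous_on_fourier_series summable)
    show "F (t + 2*pi) - ?S (t + 2*pi) = F t - ?S t" for t
      using per fourier_series_periodic[OF summable] by simp
    show "fourier_coeff (\<lambda>t. F t - ?S t) n = 0" for n
      using fourier_coeff_diff[of F ?S n] fourier_coeff_fourier_series[OF summable, of n]
        continuous_on_subset[OF cont] continuous_on_subset[OF continuous_on_fourier_series[OF summable]]
      by auto
  qed
  then show ?thesis
    by simp
qed

theorem parseval:
  fixes F G :: "real \<Rightarrow> complex"
  assumes cont: "continuous_on UNIV F" and per: "\<And>t. F (t + 2*pi) = F t"
    and summable: "(\<lambda>n. norm (fourier_coeff F n)) summable_on UNIV"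
    and cont_G: "continuous_on {0..2*pi} G"
  shows "((\<lambda>n. cnj (fourier_coeff F n) * fourier_coeff G n) has_sum
      integral {0..2*pi} (\<lambda>t. cnj (F t) * G t) / (2*pi)) UNIV"
proof -
  define c where "c = fourier_coeff F"
  obtain B where B: "\<And>t. t \<in> {0..2*pi} \<Longrightarrow> norm (G t) \<le> B"
    using compact_imp_bounded[OF compact_continuous_image[OF cont_G compact_Icc]]
    unfolding bounded_iff by blast
  have "((\<lambda>n. cnj (c n * expi n t)) has_sum cnj (fourier_series c t)) UNIV" for t
    using has_sum_fourier_series[OF summable, of t] unfolding c_def by (simp only: has_sum_cnj_iff)
  then have "((\<lambda>n. cnj (c n) * expi (-n) t) has_sum cnj (fourier_series c t)) UNIV" for t
    by (simp add: cnj_expi)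
  then have sum: "((\<lambda>n. cnj (c n) * expi (-n) t * G t) has_sum cnj (fourier_series c t) * G t) UNIV" for t
    by (rule has_sum_cmult_left)
  have "norm (cnj (c n) * expi (-n) t * G t) \<le> norm (c n) * B" if "t \<in> {0..2*pi}" for n t
    using B[OF that] by (simp add: norm_mult mult_left_mono)
  from Weierstrass_m_test_general'[OF this sum summable_on_cmult_left[OF summable[folded c_def]]]
  have "uniform_limit {0..2*pi} (\<lambda>X t. \<Sum>n\<in>X. cnj (c n) * expi (-n) t * G t)
      (\<lambda>t. cnj (fourier_series c t) * G t) (finite_subsets_at_top UNIV)" .
  then have "((\<lambda>n. integral {0..2*pi} (\<lambda>t. cnj (c n) * expi (-n) t * G t)) has_sum
      integral {0..2*pi} (\<lambda>t. cnj (fourier_series c t) * G t)) UNIV"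
    by (rule has_sum_integral_uniform_limit) (intro continuous_intros cont_G)
  moreover have "integral {0..2*pi} (\<lambda>t. cnj (c n) * expi (-n) t * G t) = cnj (c n) * fourier_coeff G n * (2*pi)" for n
    by (simp add: fourier_coeff_def mult.assoc integral_mult_right mult.commute[of "expi _ _"])
  moreover have "integral {0..2*pi} (\<lambda>t. cnj (fourier_series c t) * G t) = integral {0..2*pi} (\<lambda>t. cnj (F t) * G t)"
    using fourier_series_fourier_coeff[OF cont per summable] unfolding c_def by (intro integral_cong) simp
  ultimately have "((\<lambda>n. cnj (c n) * fourier_coeff G n * (2*pi)) has_sum integral {0..2*pi} (\<lambda>t. cnj (F t) * G t)) UNIV"
    by simp
  then show ?thesis
    unfolding c_def by (subst (asm) has_sum_cmult_left_iff) simp_all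
qed


lemma has_sum_fourier_area:
  fixes z z' z'' :: "real \<Rightarrow> complex"
  assumes deriv: "\<And>t. (z has_vector_derivative z' t) (at t)"
    and deriv': "\<And>t. (z' has_vector_derivative z'' t) (at t)"
    and cont'': "continuous_on {0..2*pi} z''"
    and per: "\<And>t. z (t + 2*pi) = z t" and per': "\<And>t. z' (t + 2*pi) = z' t"
  shows "((\<lambda>n. of_int n * (norm (fourier_coeff z n))\<^sup>2) has_sum
      integral {0..2*pi} (\<lambda>t. Im (cnj (z t) * z' t)) / (2*pi)) UNIV"
proof -
  have cont: "continuous_on UNIV z" and cont': "continuous_on UNIV z'"
    using deriv deriv' continuous_at_imp_continuous_on has_vector_derivative_continuous by blast+
  have per0: "z (2*pi) = z 0" and per0': "z' (2*pi) = z' 0"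
    using per[of 0] per'[of 0] by simp_all
  have "((\<lambda>n. cnj (fourier_coeff z n) * fourier_coeff z' n) has_sum
      integral {0..2*pi} (\<lambda>t. cnj (z t) * z' t) / (2*pi)) UNIV"
    by (rule parseval[OF cont per summable_norm_fourier_coeff[OF deriv deriv' cont'' per0 per0']])
      (rule continuous_on_subset[OF cont'], simp)
  from has_sum_Im[OF this]
  have "((\<lambda>n. Im (cnj (fourier_coeff z n) * fourier_coeff z' n)) has_sum
      Im (integral {0..2*pi} (\<lambda>t. cnj (z t) * z' t)) / (2*pi)) UNIV"
    by simp
  moreover have "Im (cnj (fourier_coeff z n) * fourier_coeff z' n) = of_int n * (norm (fourier_coeff z n))\<^sup>2" for n
  proof -
    have "cnj (fourier_coeff z n) * fourier_coeff z' n = \<i> * of_int n * of_real ((norm (fourier_coeff z n))\<^sup>2)"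
      using complex_norm_square[of "fourier_coeff z n"]
      by (simp add: fourier_coeff_deriv[OF deriv per0] algebra_simps del: of_real_power)
    then show ?thesis
      by simp
  qed
  moreover have "Im (integral {0..2*pi} (\<lambda>t. cnj (z t) * z' t)) = integral {0..2*pi} (\<lambda>t. Im (cnj (z t) * z' t))"
  proof -
    have "((\<lambda>t. cnj (z t) * z' t) has_integral integral {0..2*pi} (\<lambda>t. cnj (z t) * z' t)) {0..2*pi}"
      by (intro integrable_integral integrable_continuous_interval continuous_intros
          continuous_on_subset[OF cont] continuous_on_subset[OF cont']) auto
    from has_integral_Im[OF this] show ?thesis
      by (simp add: integral_unique)
  qed
  ultimately show ?thesis
    by simp
qed

lemma sums_of_has_sum_int:
  fixes r :: "int \<Rightarrow> 'a::banach"
  assumes "(r has_sum S) UNIV"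
  shows "(\<lambda>m. r (int (Suc m)) + r (- int (Suc m))) sums (S - r 0)"
proof -
  define P where "P = range (\<lambda>m. int (Suc m))"
  define N where "N = range (\<lambda>m. - int (Suc m))"
  have "r summable_on P" "r summable_on N"
    by (rule summable_on_subset_banach[OF has_sum_imp_summable[OF assms]], simp)+
  then obtain SP SN where SP: "(r has_sum SP) P" and SN: "(r has_sum SN) N"
    unfolding summable_on_def by blast
  have "((r \<circ> (\<lambda>m. int (Suc m))) has_sum SP) UNIV"
    using SP unfolding P_def by (subst has_sum_reindex[symmetric]) (auto simp: inj_on_def)
  then have sums_P: "(\<lambda>m. r (int (Suc m))) sums SP"
    by (simp add: o_def has_sum_imp_sums)
  have "((r \<circ> (\<lambda>m. - int (Suc m))) has_sum SN) UNIV"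
    using SN unfolding N_def by (subst has_sum_reindex[symmetric]) (auto simp: inj_on_def)
  then have sums_N: "(\<lambda>m. r (- int (Suc m))) sums SN"
    by (simp add: o_def has_sum_imp_sums)
  have "(r has_sum (SP + SN)) (P \<union> N)"
    by (rule has_sum_Un_disjoint[OF SP SN]) (auto simp: P_def N_def)
  then have "(r has_sum (SP + SN + r 0)) (P \<union> N \<union> {0})"
    by (rule has_sum_Un_disjoint) (auto simp: P_def N_def intro: has_sum_finiteI)
  moreover have "x \<in> P \<union> N \<union> {0}" for x :: int
  proof (cases x rule: int_cases3)
    case (pos n)
    then show ?thesis
      unfolding P_def by (auto intro!: image_eqI[of _ _ "n - 1"])
  next
    case (neg n)
    then show ?thesis
      unfolding N_def by (auto intro!: image_eqI[of _ _ "n - 1"])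
  qed simp
  then have "P \<union> N \<union> {0} = UNIV"
    by blast
  ultimately have "S = SP + SN + r 0"
    using has_sum_unique[OF assms] by simp
  with sums_add[OF sums_P sums_N] show ?thesis
    by simp
qed

lemma sums_multiples_of_has_sum_int:
  fixes r :: "int \<Rightarrow> 'a::banach"
  assumes sum: "(r has_sum S) UNIV" and "k > 0" and "r 0 = 0"
    and vanish: "\<And>n. \<not> int k dvd n \<Longrightarrow> r n = 0"
  shows "(\<lambda>m. r (int (k * Suc m)) + r (- int (k * Suc m))) sums S"
proof -
  have "(r has_sum S) (range (\<lambda>n. int k * n)) \<longleftrightarrow> (r has_sum S) UNIV"
    by (rule has_sum_cong_neutral) (auto intro: vanish)
  with sum have "(r has_sum S) (range (\<lambda>n. int k * n))"
    by simp
  then have "((\<lambda>n. r (int k * n)) has_sum S) UNIV"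
    using \<open>k > 0\<close> by (subst (asm) has_sum_reindex) (auto simp: inj_on_def o_def)
  from sums_of_has_sum_int[OF this]
  have "(\<lambda>m. r (int k * int (Suc m)) + r (int k * - int (Suc m))) sums (S - r (int k * 0))" .
  then show ?thesis
    by (simp only: of_nat_mult mult_minus_right mult_zero_right \<open>r 0 = 0\<close> diff_zero)
qed

section \<open>The midpoint curve\<close>

lemma expi_eq_1_iff_dvd:
  assumes "k > 0"
  shows "expi n (2*pi / real k) = 1 \<longleftrightarrow> int k dvd n"
proof
  assume "expi n (2*pi / real k) = 1"
  then obtain m :: int where "of_int n * (2*pi / real k) = of_int (2 * m) * pi"
    unfolding expi_def exp_eq_1 by auto
  then have "of_int n = real k * of_int m"
    using \<open>k > 0\<close> by (simp add: field_simps)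
  then have "n = int k * m"
    by (metis of_int_eq_iff of_int_mult of_int_of_nat_eq)
  then show "int k dvd n"
    by simp
next
  assume "int k dvd n"
  then obtain m where "n = int k * m"
    by blast
  then have "expi n (2*pi / real k) = expi m (2*pi)"
    unfolding expi_def using \<open>k > 0\<close> by (simp add: field_simps)
  then show "expi n (2*pi / real k) = 1"
    using expi_periodic[of m 0] by simp
qed

lemma sum_expi_roots_of_unity:
  assumes "k > 0"
  shows "(\<Sum>j=1..k. expi n (2*pi*real j / real k)) = (if int k dvd n then of_nat k else 0)"
proof -
  define \<omega> where "\<omega> = expi n (2*pi / real k)"
  have pow: "expi n (2*pi*real j / real k) = \<omega> ^ j" for j
    unfolding \<omega>_def expi_def by (simp add: exp_of_nat_mult[symmetric] algebra_simps)
  have "\<omega> ^ k = 1"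
    using pow[of k] \<open>k > 0\<close> expi_periodic[of n 0] by simp
  have "(\<Sum>j=1..k. expi n (2*pi*real j / real k)) = (\<Sum>i<k. \<omega> ^ Suc i)"
    unfolding pow by (rule sum.reindex_bij_witness[of _ Suc "\<lambda>j. j - 1"]) (use \<open>k > 0\<close> in auto)
  also have "\<dots> = \<omega> * (\<Sum>i<k. \<omega> ^ i)"
    by (simp add: sum_distrib_left)
  finally have sum: "(\<Sum>j=1..k. expi n (2*pi*real j / real k)) = \<omega> * (\<Sum>i<k. \<omega> ^ i)" .
  show ?thesis
  proof (cases "int k dvd n")
    case True
    then have "\<omega> = 1"
      by (simp add: \<omega>_def expi_eq_1_iff_dvd[OF \<open>k > 0\<close>])
    with sum True show ?thesis
      by simp
  next
    case False
    then have "\<omega> \<noteq> 1"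
      by (simp add: \<omega>_def expi_eq_1_iff_dvd[OF \<open>k > 0\<close>])
    with sum False \<open>\<omega> ^ k = 1\<close> show ?thesis
      by (simp add: sum_gp_strict)
  qed
qed

definition midpoint_curve :: "nat \<Rightarrow> (real \<Rightarrow> real) \<Rightarrow> real \<Rightarrow> complex" where
  "midpoint_curve k g s = of_real (2 / real k) *
     (\<Sum>j=1..k. of_real (g (s + 2*pi*real j / real k)) * expi 1 (s + 2*pi*real j / real k))"

lemma Re_midpoint_curve: "Re (midpoint_curve k h s) = omega_x h k s"
  by (simp add: midpoint_curve_def omega_x_def expi_conv_cis Re_sum)

lemma Im_midpoint_curve: "Im (midpoint_curve k h s) = omega_y h k s"
  by (simp add: midpoint_curve_def omega_y_def expi_conv_cis Im_sum)

lemma continuous_on_midpoint_curve: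
  assumes "continuous_on UNIV g"
  shows "continuous_on S (midpoint_curve k g)"
  unfolding midpoint_curve_def[abs_def] expi_def
  by (intro continuous_intros continuous_on_of_real continuous_on_compose2[OF assms]) auto

lemma has_vector_derivative_midpoint_curve:
  assumes deriv: "\<And>x. (g has_real_derivative g' x) (at x)"
  shows "(midpoint_curve k g has_vector_derivative midpoint_curve k g' s + \<i> * midpoint_curve k g s) (at s)"
proof -
  have "((\<lambda>s. of_real (g (s + c)) * expi 1 (s + c)) has_vector_derivative
      of_real (g' (s + c)) * expi 1 (s + c) + \<i> * (of_real (g (s + c)) * expi 1 (s + c))) (at s)" for c
  proof -
    have "((\<lambda>s. of_real (g (s + c))) has_vector_derivative of_real (g' (s + c))) (at s)"
      by (rule has_vector_derivative_of_real[OF DERIV_shift[THEN iffD1, OF deriv]])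
    moreover have "((\<lambda>s. expi 1 c * expi 1 s) has_vector_derivative expi 1 c * (\<i> * expi 1 s)) (at s)"
      using has_vector_derivative_mult_right[OF has_vector_derivative_expi[of 1 s UNIV], of "expi 1 c"] by simp
    ultimately show ?thesis
      using has_vector_derivative_mult by (fastforce simp: expi_add mult.commute mult.left_commute algebra_simps)
  qed
  then have "((\<lambda>s. of_real (2 / real k) * (\<Sum>j=1..k. of_real (g (s + 2*pi*real j / real k)) * expi 1 (s + 2*pi*real j / real k)))
      has_vector_derivative of_real (2 / real k) * (\<Sum>j=1..k. of_real (g' (s + 2*pi*real j / real k)) * expi 1 (s + 2*pi*real j / real k)
        + \<i> * (of_real (g (s + 2*pi*real j / real k)) * expi 1 (s + 2*pi*real j / real k)))) (at s)"
    by (intro has_vector_derivative_mult_right has_vector_derivative_sum)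
  then show ?thesis
    unfolding midpoint_curve_def[abs_def] by (simp add: sum.distrib sum_distrib_left algebra_simps)
qed

lemma midpoint_curve_periodic:
  assumes "\<And>s. g (s + 2*pi) = g s"
  shows "midpoint_curve k g (s + 2*pi) = midpoint_curve k g s"
proof -
  have "s + 2*pi + c = (s + c) + 2*pi" for c
    by simp
  then show ?thesis
    unfolding midpoint_curve_def by (simp only: assms expi_periodic)
qed

text \<open>Rotating the circumscribed k-gon by one vertex permutes the terms of the sum.\<close>

lemma midpoint_curve_rotation_periodic:
  assumes per: "\<And>s. g (s + 2*pi) = g s" and "k > 0"
  shows "midpoint_curve k g (s + 2*pi / real k) = midpoint_curve k g s"
proof -
  define f where "f j = of_real (g (s + 2*pi*real j / real k)) * expi 1 (s + 2*pi*real j / real k)" for j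
  have shift: "of_real (g (s + 2*pi / real k + 2*pi*real j / real k)) * expi 1 (s + 2*pi / real k + 2*pi*real j / real k)
      = f (Suc j)" for j
    unfolding f_def using \<open>k > 0\<close> by (simp add: field_simps)
  have "s + 2*pi*real (Suc k) / real k = (s + 2*pi*real 1 / real k) + 2*pi"
    using \<open>k > 0\<close> by (simp add: field_simps)
  then have "f (Suc k) = f 1"
    unfolding f_def by (simp only: per expi_periodic)
  have "(\<Sum>j=1..k. f (Suc j)) = (\<Sum>j=Suc 1..Suc k. f j)"
    by (rule sum.shift_bounds_cl_Suc_ivl[symmetric])
  also have "\<dots> = (\<Sum>j=1..k. f j)"
    using \<open>k > 0\<close> \<open>f (Suc k) = f 1\<close> by (simp add: sum.atLeast_Suc_atMost add.commute)
  finally show ?thesis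
    unfolding midpoint_curve_def f_def[symmetric] shift by simp
qed

lemma fourier_coeff_midpoint_curve:
  assumes cont: "continuous_on UNIV g" and per: "\<And>s. g (s + 2*pi) = g s" and "k > 0"
  shows "fourier_coeff (midpoint_curve k g) n
    = (if int k dvd n then 2 else 0) * fourier_coeff (\<lambda>t. of_real (g t)) (n - 1)"
proof -
  define W where "W t = of_real (g t) * expi 1 t" for t
  have cont_W: "continuous_on UNIV W"
    unfolding W_def[abs_def] by (intro continuous_intros continuous_on_of_real cont)
  have per_W: "W (t + 2*pi) = W t" for t
    by (simp add: W_def per expi_periodic)
  have cont_shift: "continuous_on {0..2*pi} (\<lambda>s. W (s + c))" for c
    by (rule continuous_on_compose2[OF cont_W]) (auto intro!: continuous_intros)
  have "midpoint_curve k g = (\<lambda>s. of_real (2 / real k) * (\<Sum>j=1..k. W (s + 2*pi*real j / real k)))"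
    by (simp add: midpoint_curve_def W_def fun_eq_iff)
  then have "fourier_coeff (midpoint_curve k g) n
      = of_real (2 / real k) * (\<Sum>j=1..k. fourier_coeff (\<lambda>s. W (s + 2*pi*real j / real k)) n)"
    by (simp only: fourier_coeff_const_mult_sum[OF finite_atLeastAtMost cont_shift])
  also have "\<dots> = of_real (2 / real k) * (\<Sum>j=1..k. expi n (2*pi*real j / real k)) * fourier_coeff W n"
    by (simp add: fourier_coeff_shift[OF cont_W per_W] sum_distrib_right mult.assoc)
  also have "\<dots> = (if int k dvd n then 2 else 0) * fourier_coeff W n"
    by (subst sum_expi_roots_of_unity[OF \<open>k > 0\<close>]) (use \<open>k > 0\<close> in simp)
  finally show ?thesis
    unfolding W_def fourier_coeff_mult_expi .
qed

lemma midpoint_set_area_eq_integral: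
  assumes deriv: "\<And>x. (h has_real_derivative h' x) (at x)" and cont': "continuous_on UNIV h'"
    and per: "\<And>s. h (s + 2*pi) = h s" and per': "\<And>s. h' (s + 2*pi) = h' s" and "k > 0"
  shows "midpoint_set_area h k = integral {0..2*pi}
    (\<lambda>s. Im (cnj (midpoint_curve k h s) * (midpoint_curve k h' s + \<i> * midpoint_curve k h s))) / (2 * real k)"
proof -
  define z where "z = midpoint_curve k h"
  define z' where "z' s = midpoint_curve k h' s + \<i> * z s" for s
  define Q where "Q s = Im (cnj (z s) * z' s)" for s
  have dz: "(z has_vector_derivative z' s) (at s)" for s
    unfolding z_def z'_def by (rule has_vector_derivative_midpoint_curve[OF deriv])
  have "deriv (omega_x h k) s = Re (z' s)" and "deriv (omega_y h k) s = Im (z' s)" for s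
  proof -
    have "omega_x h k = (\<lambda>s. Re (z s))" "omega_y h k = (\<lambda>s. Im (z s))"
      by (simp_all add: fun_eq_iff z_def Re_midpoint_curve Im_midpoint_curve)
    moreover have "((\<lambda>s. Re (z s)) has_real_derivative Re (z' s)) (at s)"
      and "((\<lambda>s. Im (z s)) has_real_derivative Im (z' s)) (at s)"
      using bounded_linear.has_vector_derivative[OF bounded_linear_Re dz]
        bounded_linear.has_vector_derivative[OF bounded_linear_Im dz]
      by (simp_all add: has_real_derivative_iff_has_vector_derivative)
    ultimately show "deriv (omega_x h k) s = Re (z' s)" and "deriv (omega_y h k) s = Im (z' s)"
      by (simp_all add: DERIV_imp_deriv)
  qed
  then have "midpoint_set_area h k = integral {0..2*pi / real k} Q / 2"
    unfolding midpoint_set_area_def Q_def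
    by (simp add: z_def Re_midpoint_curve[symmetric] Im_midpoint_curve[symmetric] algebra_simps)
  moreover have "integral {0..real k * (2*pi / real k)} Q = real k *\<^sub>R integral {0..2*pi / real k} Q"
  proof (rule integral_periodic_multiple)
    show "2*pi / real k > 0"
      using \<open>k > 0\<close> by simp
    show "Q (t + 2*pi / real k) = Q t" for t
      unfolding Q_def z'_def z_def
      by (simp add: midpoint_curve_rotation_periodic[where g=h, OF per \<open>k > 0\<close>]
          midpoint_curve_rotation_periodic[where g=h', OF per' \<open>k > 0\<close>])
    have "continuous_on UNIV z"
      unfolding z_def by (rule continuous_on_midpoint_curve) (use deriv in \<open>meson DERIV_isCont continuous_at_imp_continuous_on\<close>)
    then show "continuous_on UNIV Q"
      unfolding Q_def z'_def by (intro continuous_intros continuous_on_midpoint_curve cont')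
  qed
  ultimately show ?thesis
    using \<open>k > 0\<close> unfolding Q_def z'_def z_def by simp
qed

lemma norm_fourier_coeff_midpoint_curve:
  assumes cont: "continuous_on UNIV h" and per: "\<And>s. h (s + 2*pi) = h s" and "k \<ge> 2" and "n > 0"
  shows "(norm (fourier_coeff (midpoint_curve k h) (int (k * n))))\<^sup>2
      = (fourier_a h (k * n - 1))\<^sup>2 + (fourier_b h (k * n - 1))\<^sup>2"
    and "(norm (fourier_coeff (midpoint_curve k h) (- int (k * n))))\<^sup>2
      = (fourier_a h (k * n + 1))\<^sup>2 + (fourier_b h (k * n + 1))\<^sup>2"
proof -
  let ?c = "fourier_coeff (\<lambda>t. of_real (h t))"
  have "2 * 1 \<le> k * n"
    using \<open>k \<ge> 2\<close> \<open>n > 0\<close> by (intro mult_le_mono) simp_all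
  then have "k * n \<ge> 2"
    by simp
  then have "1 \<le> k * n"
    by linarith
  from of_nat_diff[OF this] have "int (k * n - 1) = int (k * n) - 1"
    by simp
  then have "fourier_coeff (midpoint_curve k h) (int (k * n)) = 2 * ?c (int (k * n - 1))"
    using fourier_coeff_midpoint_curve[OF cont per, of k "int (k * n)"] \<open>k \<ge> 2\<close>
    by (simp only:) simp
  then show "(norm (fourier_coeff (midpoint_curve k h) (int (k * n))))\<^sup>2
      = (fourier_a h (k * n - 1))\<^sup>2 + (fourier_b h (k * n - 1))\<^sup>2"
    using norm_fourier_coeff_of_real[OF cont, of "k * n - 1"] \<open>k * n \<ge> 2\<close> by (simp add: norm_mult power_mult_distrib)
  have "- int (k * n) - 1 = - int (k * n + 1)"
    by simp
  then have "fourier_coeff (midpoint_curve k h) (- int (k * n)) = 2 * ?c (- int (k * n + 1))"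
    using fourier_coeff_midpoint_curve[OF cont per, of k "- int (k * n)"] \<open>k \<ge> 2\<close>
    by (simp only:) simp
  also have "\<dots> = 2 * cnj (?c (int (k * n + 1)))"
    by (simp only: fourier_coeff_of_real_uminus)
  finally show "(norm (fourier_coeff (midpoint_curve k h) (- int (k * n))))\<^sup>2
      = (fourier_a h (k * n + 1))\<^sup>2 + (fourier_b h (k * n + 1))\<^sup>2"
    using norm_fourier_coeff_of_real[OF cont, of "k * n + 1"] by (simp add: norm_mult power_mult_distrib)
qed

lemma smooth_periodic_derivatives:
  assumes "smooth_fun h" and "periodic_2pi h"
  obtains D where "D 0 = h" and "\<And>m x. (D m has_real_derivative D (Suc m) x) (at x)"
    and "\<And>m t. D m (t + 2*pi) = D m t"
proof -
  obtain D where D0: "D 0 = h" and deriv: "\<And>m x. (D m has_real_derivative D (Suc m) x) (at x)"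
    using assms(1) unfolding smooth_fun_def by blast
  have "D m (t + 2*pi) = D m t" for m t
  proof (induction m arbitrary: t)
    case 0
    then show ?case
      using assms(2) D0 unfolding periodic_2pi_def by simp
  next
    case (Suc m)
    then show ?case
      by (rule has_real_derivative_periodic[OF _ deriv])
  qed
  with D0 deriv show thesis
    by (rule that)
qed

lemma has_sum_midpoint_set_area:
  assumes D0: "D 0 = h" and deriv: "\<And>m x. (D m has_real_derivative D (Suc m) x) (at x)"
    and per: "\<And>m t. D m (t + 2*pi) = D m t" and "k > 0"
  shows "((\<lambda>n. of_int n * (norm (fourier_coeff (midpoint_curve k h) n))\<^sup>2) has_sum
      real k * midpoint_set_area h k / pi) UNIV"
proof -
  have cont: "continuous_on UNIV (D m)" for m
    using deriv by (meson DERIV_isCont continuous_at_imp_continuous_on)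
  define Z where "Z m = midpoint_curve k (D m)" for m
  have dZ: "(Z m has_vector_derivative Z (Suc m) s + \<i> * Z m s) (at s)" for m s
    unfolding Z_def by (rule has_vector_derivative_midpoint_curve[OF deriv])
  have dZ0: "(Z 0 has_vector_derivative Z 1 s + \<i> * Z 0 s) (at s)" for s
    using dZ[of 0] by simp
  have dZ': "((\<lambda>s. Z 1 s + \<i> * Z 0 s) has_vector_derivative (Z 2 s + \<i> * Z 1 s) + \<i> * (Z 1 s + \<i> * Z 0 s)) (at s)"
    for s
    using has_vector_derivative_add[OF dZ[of 1 s] has_vector_derivative_mult_right[OF dZ[of 0 s], of \<i>]]
    by (simp add: numeral_2_eq_2)
  have cont'': "continuous_on {0..2*pi} (\<lambda>s. (Z 2 s + \<i> * Z 1 s) + \<i> * (Z 1 s + \<i> * Z 0 s))"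
    unfolding Z_def by (intro continuous_intros continuous_on_midpoint_curve cont)
  have perZ: "Z m (t + 2*pi) = Z m t" for m t
    unfolding Z_def by (rule midpoint_curve_periodic[where g="D m", OF per])
  define I where "I = integral {0..2*pi} (\<lambda>t. Im (cnj (Z 0 t) * (Z 1 t + \<i> * Z 0 t)))"
  have sum: "((\<lambda>n. of_int n * (norm (fourier_coeff (Z 0) n))\<^sup>2) has_sum I / (2*pi)) UNIV"
    unfolding I_def by (rule has_sum_fourier_area[OF dZ0 dZ' cont'']) (simp_all add: perZ)
  have "midpoint_set_area h k = I / (2 * real k)"
    using midpoint_set_area_eq_integral[OF deriv[of 0] cont[of "Suc 0"] per[of 0] per[of "Suc 0"] \<open>k > 0\<close>]
    unfolding I_def Z_def D0 by simp
  then have "I / (2*pi) = real k * midpoint_set_area h k / pi"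
    using \<open>k > 0\<close> by simp
  with sum show ?thesis
    by (simp add: Z_def D0)
qed

theorem lemma4p8:
  fixes h :: "real \<Rightarrow> real" and k :: nat
  assumes "k > 2"
    and "smooth_fun h"
    and "periodic_2pi h"
  shows "(\<lambda>m. let n = real (Suc m) in
            n * ((fourier_a h (k * Suc m - 1))\<^sup>2 + (fourier_b h (k * Suc m - 1))\<^sup>2
               - (fourier_a h (k * Suc m + 1))\<^sup>2 - (fourier_b h (k * Suc m + 1))\<^sup>2))
         sums (midpoint_set_area h k / pi)"
proof -
  obtain D where D0: "D 0 = h" and deriv: "\<And>m x. (D m has_real_derivative D (Suc m) x) (at x)"
    and per: "\<And>m t. D m (t + 2*pi) = D m t"
    using smooth_periodic_derivatives[OF assms(2,3)] by blast
  have cont: "continuous_on UNIV h" and per_h: "\<And>t. h (t + 2*pi) = h t"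
    using deriv[of 0] per[of 0] D0 by (auto intro: DERIV_isCont continuous_at_imp_continuous_on)
  define r where "r n = of_int n * (norm (fourier_coeff (midpoint_curve k h) n))\<^sup>2" for n
  have sum: "(r has_sum real k * midpoint_set_area h k / pi) UNIV"
    unfolding r_def using has_sum_midpoint_set_area[OF D0 deriv per, of k] assms(1) by simp
  have "r n = 0" if "\<not> int k dvd n" for n
    using fourier_coeff_midpoint_curve[OF cont per_h, of k n] assms(1) that by (simp add: r_def)
  from sums_multiples_of_has_sum_int[OF sum _ _ this]
  have "(\<lambda>m. r (int (k * Suc m)) + r (- int (k * Suc m))) sums (real k * midpoint_set_area h k / pi)"
    using assms(1) by (simp add: r_def)
  moreover have "r (int (k * Suc m)) + r (- int (k * Suc m)) = real k *
      (let n = real (Suc m) in n * ((fourier_a h (k * Suc m - 1))\<^sup>2 + (fourier_b h (k * Suc m - 1))\<^sup>2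
         - (fourier_a h (k * Suc m + 1))\<^sup>2 - (fourier_b h (k * Suc m + 1))\<^sup>2))" for m
    using norm_fourier_coeff_midpoint_curve[OF cont per_h, of k "Suc m"] assms(1)
    by (simp add: r_def Let_def algebra_simps)
  ultimately show ?thesis
    using sums_mult_D[of "real k"] assms(1) by fastforce
qed

end
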